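(* Let $p\ge1$ be an integer and let $\bm U:[0,T]\to\mathbb V_h$ be a differentiable solution of the semi-discrete system $$(\bm I+\mathbb A^2)\frac{d}{dt}\bm U+\mathbb D(\bm U)\bm U=0.$$ Then $P(t)=\|\bm U(t)\|_h^2+|\bm U(t)|_{2,h}^2$ satisfies $P(t)=P(0)$ for all $t\in[0,T]$.
   Context: $\Omega=[x_L,x_R]\times[y_L,y_R]$, $l_1=x_R-x_L$, $l_2=y_R-y_L$, $N_1,N_2$ even, $h_r=l_r/N_r$, grid points $x_{j_1}=x_L+j_1h_1$, $y_{j_2}=y_L+j_2h_2$, $0\le j_r\le N_r-1$. $\mathbb V_h$: doubly periodic grid functions identified with vectors $\bm U=(U_{0,0},U_{1,0},\dots,U_{N_1-1,0},U_{0,1},\dots,U_{N_1-1,N_2-1})^T$. $\langle\bm U,\bm V\rangle_h=h_1h_2\sum U_{j_1,j_2}V_{j_1,j_2}$, $\|\bm U\|_h^2=\langle\bm U,\bm U\rangle_h$. With $\mu_r=2\pi/l_r$, $g^{(1)}_k(x)=\frac1{N_1}\sum_{l=-N_1/2}^{N_1/2}\frac1{a_l}e^{\mathrm il\mu_1(x-x_k)}$, $a_l=1$ for $|l|<N_1/2$, $a_{\pm N_1/2}=2$ (similarly $g^{(2)}_k(y)$), $\bm D_s^x=(\frac{d^s}{dx^s}g^{(1)}_k(x_j))_{j,k=0}^{N_1-1}$, $\bm D_s^y=(\frac{d^s}{dy^s}g^{(2)}_k(y_j))_{j,k=0}^{N_2-1}$. $\mathbb A=\bm I_{N_2}\otimes\bm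 D_2^x+\bm D_2^y\otimes\bm I_{N_1}$, $\mathbb B=\bm I_{N_2}\otimes\bm D_3^x+\bm D_2^y\otimes\bm D_1^x$, $\mathbb L_h=\bm I_{N_2}\otimes\bm D_1^x+\bm D_1^y\otimes\bm I_{N_1}$ ($\otimes$ Kronecker product), $\mathbb D(\bm W)=\mathbb B+\mathbb L_h+\frac1{p+2}(\mathrm{diag}(\bm W^p)\mathbb L_h+\mathbb L_h\mathrm{diag}(\bm W^p))$ with $\bm W^p$ the componentwise power; $|\bm U|_{2,h}=\|\mathbb A\bm U\|_h$. This system is the Fourier pseudo-spectral semi-discretization of the GR-KdV equation $u_t+\Delta^2u_t+\Delta u_x+(1+u^p)(u_x+u_y)=0$ with periodic boundary conditions. *)

theory Defs
  imports Complex_Main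
begin

text \<open>Square matrices are represented as functions nat => nat => real (only the
entries with indices below the size matter); vectors as nat => real.\<close>

definition idm :: "nat \<Rightarrow> nat \<Rightarrow> real" where
  "idm i j = (if i = j then 1 else 0)"

definition madd :: "(nat \<Rightarrow> nat \<Rightarrow> real) \<Rightarrow> (nat \<Rightarrow> nat \<Rightarrow> real) \<Rightarrow> nat \<Rightarrow> nat \<Rightarrow> real" where
  "madd A B i j = A i j + B i j"

definition msmult :: "real \<Rightarrow> (nat \<Rightarrow> nat \<Rightarrow> real) \<Rightarrow> nat \<Rightarrow> nat \<Rightarrow> real" where
  "msmult c A i j = c * A i j"

definition mmult :: "nat \<Rightarrow> (nat \<Rightarrow> nat \<Rightarrow> real) \<Rightarrow> (nat \<Rightarrow> nat \<Rightarrow> real) \<Rightarrow> nat \<Rightarrow> nat \<Rightarrow> real" where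
  "mmult n A B i j = (\<Sum>k<n. A i k * B k j)"

definition mvec :: "nat \<Rightarrow> (nat \<Rightarrow> nat \<Rightarrow> real) \<Rightarrow> (nat \<Rightarrow> real) \<Rightarrow> nat \<Rightarrow> real" where
  "mvec n A v i = (\<Sum>k<n. A i k * v k)"

definition kron :: "nat \<Rightarrow> (nat \<Rightarrow> nat \<Rightarrow> real) \<Rightarrow> (nat \<Rightarrow> nat \<Rightarrow> real) \<Rightarrow> nat \<Rightarrow> nat \<Rightarrow> real" where
  "kron n A B i j = A (i div n) (j div n) * B (i mod n) (j mod n)"

definition mdiag :: "(nat \<Rightarrow> real) \<Rightarrow> nat \<Rightarrow> nat \<Rightarrow> real" where
  "mdiag v i j = (if i = j then v i else 0)"

definition aw :: "nat \<Rightarrow> int \<Rightarrow> real" where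
  "aw N l = (if \<bar>l\<bar> = int N div 2 then 2 else 1)"

text \<open>s-th derivative of the basis function
  g_k(x) = 1/N sum_{l=-N/2}^{N/2} 1/a_l exp(i l mu (x - x_k)), mu = 2 pi / len,
  on the grid x_j = xL + j*len/N, written out explicitly:
  d^s/dx^s g_k(x) = 1/N sum_l 1/a_l (i l mu)^s exp(i l mu (x - x_k)).
  These entries are real numbers; we take the real part to obtain a real matrix.\<close>
definition gridpt :: "real \<Rightarrow> real \<Rightarrow> nat \<Rightarrow> nat \<Rightarrow> real" where
  "gridpt xL len N j = xL + real j * (len / real N)"

definition dg :: "real \<Rightarrow> real \<Rightarrow> nat \<Rightarrow> nat \<Rightarrow> nat \<Rightarrow> real \<Rightarrow> complex" where
  "dg xL len N s k x =
     (let \<mu> = 2 * pi / len in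
      (1 / of_nat N) * (\<Sum>l\<in>{-(int N div 2)..int N div 2}.
          (1 / complex_of_real (aw N l)) * (\<i> * of_int l * complex_of_real \<mu>) ^ s
          * cis (real_of_int l * \<mu> * (x - gridpt xL len N k))))"

definition Dmat :: "real \<Rightarrow> real \<Rightarrow> nat \<Rightarrow> nat \<Rightarrow> nat \<Rightarrow> nat \<Rightarrow> real" where
  "Dmat xL len N s j k = Re (dg xL len N s k (gridpt xL len N j))"

text \<open>The matrices A, B, L_h and D(W) of the semi-discretization
  (N1 points in x over length l1 starting at xL, N2 points in y over length l2 starting at yL).\<close>
definition Amat where
  "Amat xL l1 N1 yL l2 N2 =
     madd (kron N1 idm (Dmat xL l1 N1 2)) (kron N1 (Dmat yL l2 N2 2) idm)"

definition Bmat where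
  "Bmat xL l1 N1 yL l2 N2 =
     madd (kron N1 idm (Dmat xL l1 N1 3)) (kron N1 (Dmat yL l2 N2 2) (Dmat xL l1 N1 1))"

definition Lmat where
  "Lmat xL l1 N1 yL l2 N2 =
     madd (kron N1 idm (Dmat xL l1 N1 1)) (kron N1 (Dmat yL l2 N2 1) idm)"

definition DWmat where
  "DWmat xL l1 N1 yL l2 N2 (p::nat) (W::nat \<Rightarrow> real) =
     (let L = Lmat xL l1 N1 yL l2 N2; M = N1 * N2 in
      madd (madd (Bmat xL l1 N1 yL l2 N2) L)
        (msmult (1 / (real p + 2))
           (madd (mmult M (mdiag (\<lambda>i. W i ^ p)) L) (mmult M L (mdiag (\<lambda>i. W i ^ p))))))"

definition inner_h :: "real \<Rightarrow> real \<Rightarrow> nat \<Rightarrow> (nat \<Rightarrow> real) \<Rightarrow> (nat \<Rightarrow> real) \<Rightarrow> real" where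
  "inner_h h1 h2 M U V = h1 * h2 * (\<Sum>i<M. U i * V i)"

definition norm_h_sq where
  "norm_h_sq h1 h2 M U = inner_h h1 h2 M U U"

definition semi2_h_sq where
  "semi2_h_sq xL l1 N1 yL l2 N2 U =
     norm_h_sq (l1 / real N1) (l2 / real N2) (N1 * N2) (mvec (N1 * N2) (Amat xL l1 N1 yL l2 N2) U)"

definition Pen where
  "Pen xL l1 N1 yL l2 N2 U =
     norm_h_sq (l1 / real N1) (l2 / real N2) (N1 * N2) U + semi2_h_sq xL l1 N1 yL l2 N2 U"

end

theory Submission
  imports Defs "HOL-Analysis.Analysis"
begin

text \<open>Differentiation matrices of even order are symmetric and those of odd order skew-symmetric,
  because the basis g_k is built from a frequency set symmetric under l \<mapsto> -l. Hence A is
  symmetric, while B, L_h and, for every W, D(W) are skew-symmetric; for the last one note that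
  diag(w) L_h + L_h diag(w) is skew when L_h is. Consequently the energy
  P = \<langle>U, U\<rangle> + \<langle>AU, AU\<rangle> has derivative 2 \<langle>U, (I + A^2) U'\<rangle> = -2 \<langle>U, D(U) U\<rangle> = 0.\<close>

definition symmetric_mat :: "(nat \<Rightarrow> nat \<Rightarrow> real) \<Rightarrow> bool" where
  "symmetric_mat A \<longleftrightarrow> (\<forall>i j. A i j = A j i)"

definition skew_mat :: "(nat \<Rightarrow> nat \<Rightarrow> real) \<Rightarrow> bool" where
  "skew_mat A \<longleftrightarrow> (\<forall>i j. A i j = - A j i)"

lemma dg_grid_swap:
  "dg xL len N s k (gridpt xL len N j) = (-1) ^ s * dg xL len N s j (gridpt xL len N k)"
proof -
  define m where "m = int N div 2"
  define \<mu> where "\<mu> = 2 * pi / len"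
  define c where "c = (\<lambda>l::int. (1 / complex_of_real (aw N l)) * (\<i> * of_int l * complex_of_real \<mu>) ^ s)"
  have dg_eq: "dg xL len N s k x
      = 1 / of_nat N * (\<Sum>l\<in>{-m..m}. c l * cis (real_of_int l * \<mu> * (x - gridpt xL len N k)))"
    for k x
    unfolding dg_def Let_def m_def \<mu>_def c_def ..
  have c_uminus: "c (- l) = (-1) ^ s * c l" for l
    by (simp add: c_def aw_def power_minus[symmetric])
  define xj xk where "xj = gridpt xL len N j" and "xk = gridpt xL len N k"
  have "(\<Sum>l\<in>{-m..m}. c l * cis (real_of_int l * \<mu> * (xj - xk)))
      = (\<Sum>l\<in>uminus ` {-m..m}. c l * cis (real_of_int l * \<mu> * (xj - xk)))"
    by (simp add: image_iff)
  also have "\<dots> = (\<Sum>l\<in>{-m..m}. c (- l) * cis (real_of_int l * \<mu> * (xk - xj)))"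
    by (subst sum.reindex) (auto simp: inj_on_def algebra_simps)
  also have "\<dots> = (-1) ^ s * (\<Sum>l\<in>{-m..m}. c l * cis (real_of_int l * \<mu> * (xk - xj)))"
    by (simp add: c_uminus sum_distrib_left mult.assoc)
  finally show ?thesis
    unfolding dg_eq xj_def[symmetric] xk_def[symmetric] by simp
qed

lemma Dmat_swap: "Dmat xL len N s j k = (-1) ^ s * Dmat xL len N s k j"
  unfolding Dmat_def dg_grid_swap[of xL len N s k j] by (cases "even s") auto

lemma symmetric_mat_Dmat_2: "symmetric_mat (Dmat xL len N 2)"
  unfolding symmetric_mat_def
proof (intro allI)
  fix i j
  have "Dmat xL len N 2 i j = (-1) ^ 2 * Dmat xL len N 2 j i"
    by (rule Dmat_swap)
  then show "Dmat xL len N 2 i j = Dmat xL len N 2 j i"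
    by simp
qed

lemma skew_mat_Dmat_odd:
  assumes "odd s"
  shows "skew_mat (Dmat xL len N s)"
  unfolding skew_mat_def
proof (intro allI)
  fix i j
  have "Dmat xL len N s i j = (-1) ^ s * Dmat xL len N s j i"
    by (rule Dmat_swap)
  with assms show "Dmat xL len N s i j = - Dmat xL len N s j i"
    by simp
qed

lemma symmetric_mat_idm: "symmetric_mat idm"
  by (auto simp: symmetric_mat_def idm_def)

lemma symmetric_mat_madd: "symmetric_mat A \<Longrightarrow> symmetric_mat B \<Longrightarrow> symmetric_mat (madd A B)"
  by (simp add: symmetric_mat_def madd_def)

lemma skew_matD: "skew_mat A \<Longrightarrow> A i j = - A j i"
  unfolding skew_mat_def by blast

lemma skew_mat_madd: "skew_mat A \<Longrightarrow> skew_mat B \<Longrightarrow> skew_mat (madd A B)"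
  unfolding skew_mat_def madd_def by (metis minus_add_distrib)

lemma symmetric_mat_kron: "symmetric_mat A \<Longrightarrow> symmetric_mat B \<Longrightarrow> symmetric_mat (kron n A B)"
  by (simp add: symmetric_mat_def kron_def)

lemma skew_mat_kron_symmetric_skew: "symmetric_mat A \<Longrightarrow> skew_mat B \<Longrightarrow> skew_mat (kron n A B)"
  unfolding symmetric_mat_def skew_mat_def kron_def by (metis mult_minus_right)

lemma skew_mat_kron_skew_symmetric: "skew_mat A \<Longrightarrow> symmetric_mat B \<Longrightarrow> skew_mat (kron n A B)"
  unfolding symmetric_mat_def skew_mat_def kron_def by (metis mult_minus_left)

lemma symmetric_mat_Amat: "symmetric_mat (Amat xL l1 N1 yL l2 N2)"
  unfolding Amat_def
  by (intro symmetric_mat_madd symmetric_mat_kron symmetric_mat_idm symmetric_mat_Dmat_2)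

lemma skew_mat_Bmat: "skew_mat (Bmat xL l1 N1 yL l2 N2)"
  unfolding Bmat_def
  by (intro skew_mat_madd skew_mat_kron_symmetric_skew symmetric_mat_idm symmetric_mat_Dmat_2
      skew_mat_Dmat_odd) simp_all

lemma skew_mat_Lmat: "skew_mat (Lmat xL l1 N1 yL l2 N2)"
  unfolding Lmat_def
  by (intro skew_mat_madd skew_mat_kron_symmetric_skew skew_mat_kron_skew_symmetric
      symmetric_mat_idm skew_mat_Dmat_odd) simp_all

lemma mmult_mdiag_left: "mmult n (mdiag w) L i j = (if i < n then w i * L i j else 0)"
proof -
  have "mmult n (mdiag w) L i j = (\<Sum>k<n. if i = k then w i * L i j else 0)"
    unfolding mmult_def mdiag_def by (rule sum.cong) auto
  then show ?thesis by simp
qed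

lemma mmult_mdiag_right: "mmult n L (mdiag w) i j = (if j < n then L i j * w j else 0)"
proof -
  have "mmult n L (mdiag w) i j = (\<Sum>k<n. if k = j then L i j * w j else 0)"
    unfolding mmult_def mdiag_def by (rule sum.cong) auto
  then show ?thesis by simp
qed

lemma skew_mat_diag_anticommutator:
  assumes "skew_mat L" "i < n" "j < n"
  shows "madd (mmult n (mdiag w) L) (mmult n L (mdiag w)) i j
       = - madd (mmult n (mdiag w) L) (mmult n L (mdiag w)) j i"
  using assms(2,3) unfolding madd_def mmult_mdiag_left mmult_mdiag_right
  by (simp add: skew_matD[OF assms(1), of i j] algebra_simps)

lemma DWmat_skew:
  assumes "i < N1 * N2" "j < N1 * N2"
  shows "DWmat xL l1 N1 yL l2 N2 p W i j = - DWmat xL l1 N1 yL l2 N2 p W j i"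
proof -
  let ?L = "Lmat xL l1 N1 yL l2 N2" and ?w = "\<lambda>i. W i ^ p"
  let ?X = "madd (mmult (N1 * N2) (mdiag ?w) ?L) (mmult (N1 * N2) ?L (mdiag ?w))"
  have "?X i j = - ?X j i"
    using skew_mat_Lmat assms by (rule skew_mat_diag_anticommutator)
  moreover have "madd (Bmat xL l1 N1 yL l2 N2) ?L i j = - madd (Bmat xL l1 N1 yL l2 N2) ?L j i"
    by (intro skew_matD skew_mat_madd skew_mat_Bmat skew_mat_Lmat)
  ultimately show ?thesis
    unfolding DWmat_def Let_def madd_def[of "madd _ _"] msmult_def by simp
qed

lemma mvec_madd: "mvec n (madd A B) v i = mvec n A v i + mvec n B v i"
  unfolding mvec_def madd_def by (simp add: distrib_right sum.distrib)

lemma mvec_idm: "i < n \<Longrightarrow> mvec n idm v i = v i"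
proof -
  assume "i < n"
  have "mvec n idm v i = (\<Sum>k<n. if i = k then v i else 0)"
    unfolding mvec_def idm_def by (rule sum.cong) auto
  with \<open>i < n\<close> show ?thesis by simp
qed

lemma mvec_mmult: "mvec n (mmult n A B) v i = mvec n A (mvec n B v) i"
proof -
  have "mvec n (mmult n A B) v i = (\<Sum>k<n. \<Sum>j<n. A i j * B j k * v k)"
    unfolding mvec_def mmult_def by (simp add: sum_distrib_right)
  also have "\<dots> = (\<Sum>j<n. \<Sum>k<n. A i j * B j k * v k)"
    by (rule sum.swap)
  also have "\<dots> = mvec n A (mvec n B v) i"
    unfolding mvec_def by (simp add: sum_distrib_left mult.assoc)
  finally show ?thesis .
qed

lemma sum_mvec_symmetric:
  assumes "symmetric_mat A"
  shows "(\<Sum>i<n. mvec n A u i * w i) = (\<Sum>i<n. u i * mvec n A w i)"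
proof -
  have "(\<Sum>i<n. mvec n A u i * w i) = (\<Sum>i<n. \<Sum>k<n. A i k * u k * w i)"
    unfolding mvec_def by (simp add: sum_distrib_right)
  also have "\<dots> = (\<Sum>k<n. \<Sum>i<n. A i k * u k * w i)"
    by (rule sum.swap)
  also have "\<dots> = (\<Sum>k<n. u k * mvec n A w k)"
    using assms unfolding mvec_def symmetric_mat_def by (simp add: sum_distrib_left mult_ac)
  finally show ?thesis .
qed

lemma sum_mvec_skew_eq_0:
  assumes "\<And>i j. i < n \<Longrightarrow> j < n \<Longrightarrow> D i j = - D j i"
  shows "(\<Sum>i<n. u i * mvec n D u i) = 0"
proof -
  define S where "S = (\<Sum>i<n. \<Sum>j<n. u i * D i j * u j)"
  have "S = (\<Sum>j<n. \<Sum>i<n. u i * D i j * u j)"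
    unfolding S_def by (rule sum.swap)
  also have "\<dots> = (\<Sum>j<n. \<Sum>i<n. - (u j * D j i * u i))"
  proof (intro sum.cong refl)
    fix j i assume "j \<in> {..<n}" "i \<in> {..<n}"
    then have "D i j = - D j i" by (intro assms) auto
    then show "u i * D i j * u j = - (u j * D j i * u i)" by simp
  qed
  also have "\<dots> = - S"
    unfolding S_def by (simp add: sum_negf)
  finally have "S = 0" by simp
  then show ?thesis
    unfolding S_def mvec_def by (simp add: sum_distrib_left mult.assoc)
qed

definition energy :: "nat \<Rightarrow> (nat \<Rightarrow> nat \<Rightarrow> real) \<Rightarrow> (nat \<Rightarrow> real) \<Rightarrow> real" where
  "energy n A U = (\<Sum>i<n. U i * U i) + (\<Sum>i<n. mvec n A U i * mvec n A U i)"

lemma Pen_eq_energy: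
  "Pen xL l1 N1 yL l2 N2 U
     = l1 / real N1 * (l2 / real N2) * energy (N1 * N2) (Amat xL l1 N1 yL l2 N2) U"
  unfolding Pen_def semi2_h_sq_def norm_h_sq_def inner_h_def energy_def
  by (simp add: distrib_left)

lemma mvec_has_real_derivative:
  assumes "\<And>k. k < n \<Longrightarrow> ((\<lambda>s. U s k) has_real_derivative U' k) (at t within S)"
  shows "((\<lambda>s. mvec n A (U s) i) has_real_derivative mvec n A U' i) (at t within S)"
  unfolding mvec_def by (intro DERIV_sum DERIV_cmult) (simp add: assms)

lemma energy_has_real_derivative:
  assumes "symmetric_mat A"
    and deriv: "\<And>k. k < n \<Longrightarrow> ((\<lambda>s. U s k) has_real_derivative U' k) (at t within S)"
  shows "((\<lambda>s. energy n A (U s)) has_real_derivative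
           2 * (\<Sum>i<n. U t i * mvec n (madd idm (mmult n A A)) U' i)) (at t within S)"
proof -
  have "((\<lambda>s. energy n A (U s)) has_real_derivative
          (\<Sum>i<n. U t i * U' i + U' i * U t i)
        + (\<Sum>i<n. mvec n A (U t) i * mvec n A U' i + mvec n A U' i * mvec n A (U t) i))
        (at t within S)"
    unfolding energy_def using deriv mvec_has_real_derivative[OF deriv]
    by (intro DERIV_add DERIV_sum DERIV_mult') auto
  then have "((\<lambda>s. energy n A (U s)) has_real_derivative
          2 * (\<Sum>i<n. U t i * U' i) + 2 * (\<Sum>i<n. mvec n A (U t) i * mvec n A U' i))
        (at t within S)"
    by (simp add: sum_distrib_left mult.commute)
  moreover have "(\<Sum>i<n. U t i * mvec n (madd idm (mmult n A A)) U' i)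
      = (\<Sum>i<n. U t i * U' i) + (\<Sum>i<n. mvec n A (U t) i * mvec n A U' i)"
    by (simp add: mvec_madd mvec_idm mvec_mmult distrib_left sum.distrib
        sum_mvec_symmetric[OF assms(1)])
  ultimately show ?thesis
    by (simp add: distrib_left)
qed

lemma energy_conserved:
  assumes "symmetric_mat A"
    and skew: "\<And>t i j. t \<in> {a..b} \<Longrightarrow> i < n \<Longrightarrow> j < n \<Longrightarrow> D t i j = - D t j i"
    and deriv: "\<And>t k. t \<in> {a..b} \<Longrightarrow> k < n \<Longrightarrow>
                  ((\<lambda>s. U s k) has_real_derivative U' t k) (at t within {a..b})"
    and ode: "\<And>t i. t \<in> {a..b} \<Longrightarrow> i < n \<Longrightarrow>
                mvec n (madd idm (mmult n A A)) (U' t) i + mvec n (D t) (U t) i = 0"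
    and t: "t \<in> {a..b}" and s: "s \<in> {a..b}"
  shows "energy n A (U t) = energy n A (U s)"
proof -
  have "((\<lambda>s. energy n A (U s)) has_real_derivative 0) (at \<tau> within {a..b})"
    if \<tau>: "\<tau> \<in> {a..b}" for \<tau>
  proof -
    have "(\<Sum>i<n. U \<tau> i * mvec n (madd idm (mmult n A A)) (U' \<tau>) i)
        = - (\<Sum>i<n. U \<tau> i * mvec n (D \<tau>) (U \<tau>) i)"
      using ode[OF \<tau>] by (simp add: sum_negf[symmetric] eq_neg_iff_add_eq_0[symmetric])
    also have "\<dots> = 0"
      using sum_mvec_skew_eq_0[OF skew[OF \<tau>]] by simp
    moreover have "((\<lambda>s. energy n A (U s)) has_real_derivative
        2 * (\<Sum>i<n. U \<tau> i * mvec n (madd idm (mmult n A A)) (U' \<tau>) i)) (at \<tau> within {a..b})"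
      by (intro energy_has_real_derivative assms(1) deriv \<tau>)
    ultimately show ?thesis by simp
  qed
  then obtain c where "\<forall>s\<in>{a..b}. energy n A (U s) = c"
    using has_field_derivative_zero_constant[of "{a..b}" "\<lambda>s. energy n A (U s)"] by auto
  with t s show ?thesis by simp
qed

theorem lemma2p6:
  fixes xL xR yL yR T :: real and N1 N2 p :: nat
    and U U' :: "real \<Rightarrow> nat \<Rightarrow> real"
  assumes "xL < xR" and "yL < yR"
    and "even N1" and "even N2" and "N1 > 0" and "N2 > 0"
    and "p \<ge> 1"
    and deriv: "\<forall>t\<in>{0..T}. \<forall>i<N1 * N2.
            ((\<lambda>s. U s i) has_real_derivative U' t i) (at t within {0..T})"
    and ode: "\<forall>t\<in>{0..T}. \<forall>i<N1 * N2.
            mvec (N1 * N2)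
               (madd idm (mmult (N1 * N2) (Amat xL (xR - xL) N1 yL (yR - yL) N2)
                                          (Amat xL (xR - xL) N1 yL (yR - yL) N2))) (U' t) i
          + mvec (N1 * N2) (DWmat xL (xR - xL) N1 yL (yR - yL) N2 p (U t)) (U t) i = 0"
  shows "\<forall>t\<in>{0..T}. Pen xL (xR - xL) N1 yL (yR - yL) N2 (U t)
                     = Pen xL (xR - xL) N1 yL (yR - yL) N2 (U 0)"
proof
  fix t assume "t \<in> {0..T}"
  then have "0 \<in> {0..T}" by simp
  have "energy (N1 * N2) (Amat xL (xR - xL) N1 yL (yR - yL) N2) (U t)
      = energy (N1 * N2) (Amat xL (xR - xL) N1 yL (yR - yL) N2) (U 0)"
    using deriv ode \<open>t \<in> {0..T}\<close> \<open>0 \<in> {0..T}\<close>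
    by (intro energy_conserved[where D = "\<lambda>t. DWmat xL (xR - xL) N1 yL (yR - yL) N2 p (U t)"]
        symmetric_mat_Amat DWmat_skew) auto
  then show "Pen xL (xR - xL) N1 yL (yR - yL) N2 (U t) = Pen xL (xR - xL) N1 yL (yR - yL) N2 (U 0)"
    by (simp add: Pen_eq_energy)
qed

end
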